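(* Let $(M^{2m},F,g)$ be a para-Kähler-Norden manifold, let $V$ be a unit parallel vector field on $M$, let $\alpha:M\to(0,\infty)$ be smooth with $(FV)(\alpha)=0$, and let $g^{\alpha}(X,Y)=\alpha\big(g(X,Y)+g(X,FV)g(Y,FV)\big)$. Then the tension field of the identity map $I:(M^{2m},g^{\alpha})\to(M^{2m},g)$ is $$\widetilde{\tau}(I)=\frac{m-1}{\alpha^{2}}\mathrm{grad}\,\alpha .$$
   Context: A para-Kähler-Norden manifold $(M^{2m},F,g)$: $M$ is a $2m$-dimensional smooth manifold, $F$ is a $(1,1)$-tensor field with $F^2=I$ whose eigenbundles for the eigenvalues $+1,-1$ have the same rank, $g$ is a Riemannian metric with $g(FX,Y)=g(X,FY)$, and $\nabla F=0$ for the Levi-Civita connection $\nabla$ of $g$. $V$ unit parallel means $g(V,V)=1$, $\nabla V=0$. $\mathrm{grad}\,\alpha$ is the $g$-gradient. The tension field of a smooth map $\phi:(M,g')\to(N,h)$ is $\tau(\phi)=\mathrm{Tr}_{g'}\nabla d\phi=\sum_i\big(\nabla^{\phi}_{e_i}d\phi(e_i)-d\phi(\nabla'_{e_i}e_i)\big)$ for a $g'$-orthonormal frame, $\nabla'$ the Levi-Civita connection of $g'$ and $\nabla^\phi$ the pull-back of the Levi-Civita connection of $h$. *)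

theory Defs
  imports "HOL-Analysis.Analysis"
begin

text \<open>Local (coordinate-chart) differential geometry on an open set U of real^'n.
  Points are x :: real^'n; a vector field is X :: real^'n => real^'n;
  a (1,1)-tensor field / metric is a matrix field real^'n => real^'n^'n,
  with F x $ k $ j = F^k_j and g x $ i $ j = g_ij.\<close>

definition pd :: "'n::finite \<Rightarrow> (real^'n \<Rightarrow> real) \<Rightarrow> real^'n \<Rightarrow> real" where
  "pd i f x = frechet_derivative f (at x) (axis i 1)"

coinductive smooth_fn :: "(real^'n::finite) set \<Rightarrow> (real^'n \<Rightarrow> real) \<Rightarrow> bool" where
  "(\<forall>x\<in>U. f differentiable (at x)) \<Longrightarrow> (\<forall>i. smooth_fn U (pd i f)) \<Longrightarrow> smooth_fn U f"

definition smooth_vf :: "(real^'n::finite) set \<Rightarrow> (real^'n \<Rightarrow> real^'n) \<Rightarrow> bool" where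
  "smooth_vf U X \<longleftrightarrow> (\<forall>k. smooth_fn U (\<lambda>y. X y $ k))"

definition smooth_tf :: "(real^'n::finite) set \<Rightarrow> (real^'n \<Rightarrow> real^'n^'n) \<Rightarrow> bool" where
  "smooth_tf U A \<longleftrightarrow> (\<forall>i j. smooth_fn U (\<lambda>y. A y $ i $ j))"

definition riem_metric :: "(real^'n::finite) set \<Rightarrow> (real^'n \<Rightarrow> real^'n^'n) \<Rightarrow> bool" where
  "riem_metric U g \<longleftrightarrow> open U \<and> smooth_tf U g \<and>
     (\<forall>x\<in>U. transpose (g x) = g x \<and> (\<forall>v. v \<noteq> 0 \<longrightarrow> v \<bullet> (g x *v v) > 0))"

definition christoffel :: "(real^'n::finite \<Rightarrow> real^'n^'n) \<Rightarrow> real^'n \<Rightarrow> 'n \<Rightarrow> 'n \<Rightarrow> 'n \<Rightarrow> real" where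
  "christoffel g x k i j = (1/2) * (\<Sum>l\<in>UNIV. matrix_inv (g x) $ k $ l *
      (pd i (\<lambda>y. g y $ j $ l) x + pd j (\<lambda>y. g y $ i $ l) x - pd l (\<lambda>y. g y $ i $ j) x))"

definition cov :: "(real^'n::finite \<Rightarrow> real^'n^'n) \<Rightarrow> (real^'n \<Rightarrow> real^'n) \<Rightarrow> (real^'n \<Rightarrow> real^'n) \<Rightarrow> real^'n \<Rightarrow> real^'n" where
  "cov g X Y x = (\<chi> k. (\<Sum>i\<in>UNIV. X x $ i * pd i (\<lambda>y. Y y $ k) x)
      + (\<Sum>i\<in>UNIV. \<Sum>j\<in>UNIV. christoffel g x k i j * X x $ i * Y x $ j))"

definition parallel_tf :: "(real^'n::finite) set \<Rightarrow> (real^'n \<Rightarrow> real^'n^'n) \<Rightarrow> (real^'n \<Rightarrow> real^'n^'n) \<Rightarrow> bool" where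
  "parallel_tf U g F \<longleftrightarrow> (\<forall>x\<in>U. \<forall>i k j. pd i (\<lambda>y. F y $ k $ j) x
      + (\<Sum>l\<in>UNIV. christoffel g x k i l * F x $ l $ j)
      - (\<Sum>l\<in>UNIV. christoffel g x l i j * F x $ k $ l) = 0)"

definition parallel_vf :: "(real^'n::finite) set \<Rightarrow> (real^'n \<Rightarrow> real^'n^'n) \<Rightarrow> (real^'n \<Rightarrow> real^'n) \<Rightarrow> bool" where
  "parallel_vf U g V \<longleftrightarrow> (\<forall>x\<in>U. \<forall>i. cov g (\<lambda>_. axis i 1) V x = 0)"

definition dir_deriv :: "(real^'n::finite \<Rightarrow> real^'n) \<Rightarrow> (real^'n \<Rightarrow> real) \<Rightarrow> real^'n \<Rightarrow> real" where
  "dir_deriv X f x = (\<Sum>i\<in>UNIV. X x $ i * pd i f x)"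

definition grad :: "(real^'n::finite \<Rightarrow> real^'n^'n) \<Rightarrow> (real^'n \<Rightarrow> real) \<Rightarrow> real^'n \<Rightarrow> real^'n" where
  "grad g f x = (\<chi> k. \<Sum>l\<in>UNIV. matrix_inv (g x) $ k $ l * pd l f x)"

definition para_kaehler_norden :: "nat \<Rightarrow> (real^'n::finite) set \<Rightarrow> (real^'n \<Rightarrow> real^'n^'n) \<Rightarrow> (real^'n \<Rightarrow> real^'n^'n) \<Rightarrow> bool" where
  "para_kaehler_norden m U F g \<longleftrightarrow> CARD('n) = 2 * m \<and> riem_metric U g \<and> smooth_tf U F \<and>
     (\<forall>x\<in>U. F x ** F x = mat 1 \<and>
        dim {v. F x *v v = v} = dim {v. F x *v v = - v} \<and>
        (\<forall>X Y. (F x *v X) \<bullet> (g x *v Y) = X \<bullet> (g x *v (F x *v Y)))) \<and>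
     parallel_tf U g F"

definition g_alpha :: "(real^'n::finite \<Rightarrow> real^'n^'n) \<Rightarrow> (real^'n \<Rightarrow> real^'n^'n) \<Rightarrow> (real^'n \<Rightarrow> real^'n) \<Rightarrow> (real^'n \<Rightarrow> real) \<Rightarrow> real^'n \<Rightarrow> real^'n^'n" where
  "g_alpha g F V \<alpha> x = \<alpha> x *\<^sub>R (g x + (\<chi> i j. (g x *v (F x *v V x)) $ i * (g x *v (F x *v V x)) $ j))"

definition dphi :: "(real^'n::finite \<Rightarrow> real^'n) \<Rightarrow> real^'n \<Rightarrow> real^'n \<Rightarrow> real^'n" where
  "dphi \<phi> x v = (\<chi> c. \<Sum>k\<in>UNIV. v $ k * pd k (\<lambda>y. \<phi> y $ c) x)"

definition cov_pull :: "(real^'n::finite \<Rightarrow> real^'n^'n) \<Rightarrow> (real^'n \<Rightarrow> real^'n) \<Rightarrow> (real^'n \<Rightarrow> real^'n) \<Rightarrow> (real^'n \<Rightarrow> real^'n) \<Rightarrow> real^'n \<Rightarrow> real^'n" where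
  "cov_pull h \<phi> X W x = (\<chi> c. (\<Sum>i\<in>UNIV. X x $ i * pd i (\<lambda>y. W y $ c) x)
      + (\<Sum>a\<in>UNIV. \<Sum>b\<in>UNIV. christoffel h (\<phi> x) c a b * dphi \<phi> x (X x) $ a * W x $ b))"

definition orthonormal_frame :: "(real^'n::finite) set \<Rightarrow> (real^'n \<Rightarrow> real^'n^'n) \<Rightarrow> ('n \<Rightarrow> real^'n \<Rightarrow> real^'n) \<Rightarrow> bool" where
  "orthonormal_frame U g e \<longleftrightarrow> (\<forall>i. smooth_vf U (e i)) \<and>
     (\<forall>x\<in>U. \<forall>i j. e i x \<bullet> (g x *v e j x) = (if i = j then 1 else 0))"

definition tension :: "(real^'n::finite \<Rightarrow> real^'n^'n) \<Rightarrow> (real^'n \<Rightarrow> real^'n^'n) \<Rightarrow> (real^'n \<Rightarrow> real^'n) \<Rightarrow> ('n \<Rightarrow> real^'n \<Rightarrow> real^'n) \<Rightarrow> real^'n \<Rightarrow> real^'n" where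
  "tension g' h \<phi> e x = (\<Sum>i\<in>UNIV. cov_pull h \<phi> (e i) (\<lambda>y. dphi \<phi> y (e i y)) x
      - dphi \<phi> x (cov g' (e i) (e i) x))"

end

theory Submission
  imports Defs
begin

(* Put omega = g(FV) and H = g + omega \<otimes> omega, so that g^alpha = alpha H. Since F and V are
   parallel, so are FV, omega and H; a parallel nondegenerate symmetric form has the Christoffel
   symbols of g. Hence g^alpha is a conformal change of H, whose Christoffel symbols exceed those of
   H by (d_a alpha delta^c_b + d_b alpha delta^c_a - H_ab grad_H alpha^c) / (2 alpha).
   The tension field of the identity is the g^alpha-trace of Gamma^g - Gamma^(g^alpha), and tracing
   this difference against (g^alpha)^-1 = H^-1 / alpha gives (n - 2) / (2 alpha^2) grad_H alpha.
   Finally grad_H alpha = grad_g alpha because omega(grad_g alpha) = (FV)(alpha) = 0. *)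

section \<open>Matrix inverses\<close>

lemma matrix_inv_right:
  fixes A :: "real^'n^'n"
  assumes "invertible A"
  shows "A ** matrix_inv A = mat 1"
proof -
  have "\<exists>A'. A ** A' = mat 1 \<and> A' ** A = mat 1" using assms unfolding invertible_def .
  then show ?thesis unfolding matrix_inv_def by (rule someI2_ex) blast
qed

lemma matrix_inv_left:
  fixes A :: "real^'n^'n"
  assumes "invertible A"
  shows "matrix_inv A ** A = mat 1"
  using matrix_inv_right[OF assms] matrix_left_right_inverse by blast

lemma matrix_inv_unique:
  fixes A B :: "real^'n^'n"
  assumes "A ** B = mat 1"
  shows "matrix_inv A = B"
proof -
  have "invertible A" using assms invertible_right_inverse by blast
  have "matrix_inv A = matrix_inv A ** (A ** B)" by (simp add: assms)
  also have "\<dots> = (matrix_inv A ** A) ** B" by (rule matrix_mul_assoc)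
  finally show ?thesis by (simp add: matrix_inv_left[OF \<open>invertible A\<close>])
qed

lemma matrix_inv_scaleR:
  fixes A :: "real^'n^'n"
  assumes "c \<noteq> 0" and "invertible A"
  shows "matrix_inv (c *\<^sub>R A) = (1 / c) *\<^sub>R matrix_inv A"
proof (rule matrix_inv_unique)
  have "(c *\<^sub>R A) ** ((1 / c) *\<^sub>R matrix_inv A) = (1 / c * c) *\<^sub>R (A ** matrix_inv A)"
    by (simp only: matrix_scalar_ac scalar_matrix_assoc[symmetric] scaleR_scaleR)
  then show "(c *\<^sub>R A) ** ((1 / c) *\<^sub>R matrix_inv A) = mat 1"
    using assms by (simp add: matrix_inv_right)
qed

lemma symmetric_matrix_nth:
  fixes A :: "'a^'n^'n"
  assumes "transpose A = A"
  shows "A $ i $ j = A $ j $ i"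
  by (metis assms transpose_def vec_lambda_beta)

lemma matrix_inv_symmetric:
  fixes A :: "real^'n^'n"
  assumes "transpose A = A" and "invertible A"
  shows "transpose (matrix_inv A) = matrix_inv A"
proof -
  have "transpose A ** transpose (matrix_inv A) = transpose (matrix_inv A ** A)"
    by (rule matrix_transpose_mul[symmetric])
  also have "\<dots> = mat 1" by (simp add: matrix_inv_left[OF assms(2)])
  finally have "A ** transpose (matrix_inv A) = mat 1" by (simp only: assms(1))
  then show ?thesis by (rule matrix_inv_unique[symmetric])
qed

lemma positive_definite_invertible:
  fixes A :: "real^'n^'n"
  assumes "\<And>v. v \<noteq> 0 \<Longrightarrow> v \<bullet> (A *v v) > 0"
  shows "invertible A"
proof -
  have "inj ((*v) A)"
  proof (rule injI)
    fix v w assume "A *v v = A *v w"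
    then have "A *v (v - w) = 0" by (simp add: matrix_vector_mult_diff_distrib)
    then show "v = w" using assms[of "v - w"] by force
  qed
  then obtain B where "B ** A = mat 1" using matrix_left_invertible_injective by blast
  then show ?thesis using invertible_left_inverse by blast
qed

lemma matrix_mul_mat_1_nth:
  fixes A B :: "real^'n^'n"
  assumes "A ** B = mat 1"
  shows "(\<Sum>k\<in>UNIV. A $ i $ k * B $ k $ j) = (if i = j then 1 else 0)"
  using arg_cong[OF assms, of "\<lambda>M. M $ i $ j"] by (simp add: matrix_matrix_mult_def mat_def)

lemma matrix_mul_mat_1_cancel:
  fixes A B :: "real^'n^'n"
  assumes "A ** B = mat 1"
  shows "(\<Sum>c\<in>UNIV. A $ l $ c * (\<Sum>p\<in>UNIV. B $ c $ p * X p)) = X l"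
proof -
  have "(A *v (B *v (\<chi> p. X p))) $ l = X l"
    by (simp add: matrix_vector_mul_assoc assms)
  then show ?thesis by (simp add: matrix_vector_mult_def)
qed

lemma outer_product_mult_vector:
  "(\<chi> i j. a $ i * a $ j) *v u = (a \<bullet> u) *\<^sub>R (a :: real^'n::finite)"
  by (simp add: matrix_vector_mult_def inner_vec_def vec_eq_iff sum_distrib_left mult_ac)

section \<open>Partial derivatives\<close>

lemma pd_add:
  assumes "f differentiable (at x)" "h differentiable (at x)"
  shows "pd k (\<lambda>y. f y + h y) x = pd k f x + pd k h x"
proof -
  have "((\<lambda>y. f y + h y) has_derivative
      (\<lambda>v. frechet_derivative f (at x) v + frechet_derivative h (at x) v)) (at x)"
    using assms by (intro has_derivative_add) (simp_all add: frechet_derivative_works[symmetric])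
  from frechet_derivative_at[OF this] show ?thesis unfolding pd_def by metis
qed

lemma pd_mult:
  assumes "f differentiable (at x)" "h differentiable (at x)"
  shows "pd k (\<lambda>y. f y * h y) x = f x * pd k h x + pd k f x * h x"
proof -
  have "((\<lambda>y. f y * h y) has_derivative
      (\<lambda>v. f x * frechet_derivative h (at x) v + frechet_derivative f (at x) v * h x)) (at x)"
    using assms by (intro has_derivative_mult) (simp_all add: frechet_derivative_works[symmetric])
  from frechet_derivative_at[OF this] show ?thesis unfolding pd_def by metis
qed

lemma pd_sum:
  assumes "\<And>i. f i differentiable (at x)"
  shows "pd k (\<lambda>y. \<Sum>i\<in>(UNIV::'m::finite set). f i y) x = (\<Sum>i\<in>UNIV. pd k (f i) x)"
proof -
  have "((\<lambda>y. \<Sum>i\<in>(UNIV::'m set). f i y) has_derivative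
      (\<lambda>v. \<Sum>i\<in>UNIV. frechet_derivative (f i) (at x) v)) (at x)"
    using assms by (intro has_derivative_sum) (simp_all add: frechet_derivative_works[symmetric])
  from frechet_derivative_at[OF this] show ?thesis unfolding pd_def by metis
qed

lemma pd_vec_nth:
  fixes x :: "real^'n::finite"
  shows "pd k (\<lambda>y. y $ c) x = (if k = c then 1 else 0)"
proof -
  have "((\<lambda>y::real^'n. y $ c) has_derivative (\<lambda>y. y $ c)) (at x)"
    by (rule bounded_linear_imp_has_derivative) (rule bounded_linear_vec_nth)
  then have "frechet_derivative (\<lambda>y::real^'n. y $ c) (at x) = (\<lambda>y. y $ c)"
    by (rule frechet_derivative_at[symmetric])
  then show ?thesis unfolding pd_def axis_def by auto
qed

lemma pd_eq_on_open:
  assumes "f differentiable (at x)" "open U" "x \<in> U" "\<And>y. y \<in> U \<Longrightarrow> f y = h y"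
  shows "pd k f x = pd k h x"
  unfolding pd_def using frechet_derivative_transform_within_open[OF assms] by simp

lemma smooth_fn_differentiable: "smooth_fn U f \<Longrightarrow> x \<in> U \<Longrightarrow> f differentiable (at x)"
  by (erule smooth_fn.cases) auto

lemma smooth_vf_differentiable:
  "smooth_vf U X \<Longrightarrow> x \<in> U \<Longrightarrow> (\<lambda>y. X y $ i) differentiable (at x)"
  unfolding smooth_vf_def by (blast intro: smooth_fn_differentiable)

lemma smooth_tf_differentiable:
  "smooth_tf U A \<Longrightarrow> x \<in> U \<Longrightarrow> (\<lambda>y. A y $ i $ j) differentiable (at x)"
  unfolding smooth_tf_def by (blast intro: smooth_fn_differentiable)

lemma differentiable_matrix_vector_mult_nth:
  fixes A :: "real^'n::finite \<Rightarrow> real^'m::finite^'k" and v :: "real^'n \<Rightarrow> real^'m"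
  assumes "\<And>i j. (\<lambda>y. A y $ i $ j) differentiable (at x)" "\<And>j. (\<lambda>y. v y $ j) differentiable (at x)"
  shows "(\<lambda>y. (A y *v v y) $ i) differentiable (at x)"
  unfolding matrix_vector_mult_def vec_lambda_beta by (intro differentiable_sum ballI differentiable_mult assms) simp

section \<open>Levi-Civita connection and parallel fields\<close>

lemma riem_metric_transpose: "riem_metric U g \<Longrightarrow> x \<in> U \<Longrightarrow> transpose (g x) = g x"
  unfolding riem_metric_def by blast

lemma riem_metric_symmetric: "riem_metric U g \<Longrightarrow> x \<in> U \<Longrightarrow> g x $ i $ j = g x $ j $ i"
  by (rule symmetric_matrix_nth[OF riem_metric_transpose])

lemma riem_metric_invertible: "riem_metric U g \<Longrightarrow> x \<in> U \<Longrightarrow> invertible (g x)"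
  unfolding riem_metric_def by (blast intro: positive_definite_invertible)

lemma riem_metric_differentiable:
  "riem_metric U g \<Longrightarrow> x \<in> U \<Longrightarrow> (\<lambda>y. g y $ i $ j) differentiable (at x)"
  unfolding riem_metric_def by (blast intro: smooth_tf_differentiable)

lemma riem_metric_pd_symmetric:
  assumes "riem_metric U g" "x \<in> U"
  shows "pd k (\<lambda>y. g y $ i $ j) x = pd k (\<lambda>y. g y $ j $ i) x"
proof (rule pd_eq_on_open[OF riem_metric_differentiable[OF assms] _ assms(2)])
  show "open U" using assms(1) unfolding riem_metric_def by blast
  show "g y $ i $ j = g y $ j $ i" if "y \<in> U" for y
    using assms(1) that by (rule riem_metric_symmetric)
qed

lemma riem_metric_add_outer:
  assumes "riem_metric U g" "x \<in> U"
  shows "transpose (g x + (\<chi> i j. a $ i * a $ j)) = g x + (\<chi> i j. a $ i * a $ j)"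
    and "invertible (g x + (\<chi> i j. a $ i * a $ j))"
proof -
  show "transpose (g x + (\<chi> i j. a $ i * a $ j)) = g x + (\<chi> i j. a $ i * a $ j)"
    using riem_metric_symmetric[OF assms] by (simp add: transpose_def vec_eq_iff mult.commute)
  have "v \<bullet> (g x *v v) > 0" if "v \<noteq> 0" for v
    using assms that unfolding riem_metric_def by blast
  then show "invertible (g x + (\<chi> i j. a $ i * a $ j))"
    by (intro positive_definite_invertible)
      (simp add: matrix_vector_mult_add_rdistrib outer_product_mult_vector inner_add_right
        inner_commute[of _ a] add_pos_nonneg)
qed

lemma christoffel_lowered:
  assumes "invertible (g x)"
  shows "(\<Sum>c\<in>UNIV. g x $ l $ c * christoffel g x c a b)
    = 1/2 * (pd a (\<lambda>y. g y $ b $ l) x + pd b (\<lambda>y. g y $ a $ l) x - pd l (\<lambda>y. g y $ a $ b) x)"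
  unfolding christoffel_def
  by (simp only: mult.left_commute[of "g x $ l $ _" "1/2"] sum_distrib_left[symmetric]
      matrix_mul_mat_1_cancel[OF matrix_inv_right[OF assms]])

lemma christoffel_symmetric:
  assumes "\<And>k i j. pd k (\<lambda>y. g y $ i $ j) x = pd k (\<lambda>y. g y $ j $ i) x"
  shows "christoffel g x c a b = christoffel g x c b a"
proof -
  have swap: "pd a (\<lambda>y. g y $ b $ l) x + pd b (\<lambda>y. g y $ a $ l) x - pd l (\<lambda>y. g y $ a $ b) x
      = pd b (\<lambda>y. g y $ a $ l) x + pd a (\<lambda>y. g y $ b $ l) x - pd l (\<lambda>y. g y $ b $ a) x" for l
    using assms[of l a b] by simp
  show ?thesis by (simp only: christoffel_def swap)
qed

definition parallel_covector_at ::
    "(real^'n::finite \<Rightarrow> real^'n^'n) \<Rightarrow> (real^'n \<Rightarrow> real^'n) \<Rightarrow> real^'n \<Rightarrow> bool" where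
  "parallel_covector_at g \<omega> x \<longleftrightarrow>
     (\<forall>k i. pd k (\<lambda>y. \<omega> y $ i) x = (\<Sum>p\<in>UNIV. christoffel g x p k i * \<omega> x $ p))"

definition parallel_form_at ::
    "(real^'n::finite \<Rightarrow> real^'n^'n) \<Rightarrow> (real^'n \<Rightarrow> real^'n^'n) \<Rightarrow> real^'n \<Rightarrow> bool" where
  "parallel_form_at g H x \<longleftrightarrow> (\<forall>k i j. pd k (\<lambda>y. H y $ i $ j) x =
     (\<Sum>p\<in>UNIV. christoffel g x p k i * H x $ p $ j) + (\<Sum>p\<in>UNIV. christoffel g x p k j * H x $ i $ p))"

lemma riem_metric_parallel:
  assumes "riem_metric U g" "x \<in> U"
  shows "parallel_form_at g g x"
  unfolding parallel_form_at_def
proof (intro allI)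
  fix k i j
  note sym = riem_metric_symmetric[OF assms] and dsym = riem_metric_pd_symmetric[OF assms]
  have "(\<Sum>p\<in>UNIV. christoffel g x p k i * g x $ p $ j) = (\<Sum>p\<in>UNIV. g x $ j $ p * christoffel g x p k i)"
    by (simp add: sym[of _ j] mult.commute)
  also have "\<dots> = 1/2 * (pd k (\<lambda>y. g y $ i $ j) x + pd i (\<lambda>y. g y $ k $ j) x - pd j (\<lambda>y. g y $ k $ i) x)"
    by (rule christoffel_lowered) (rule riem_metric_invertible[OF assms])
  finally have lower_i: "(\<Sum>p\<in>UNIV. christoffel g x p k i * g x $ p $ j) = \<dots>" .
  have "(\<Sum>p\<in>UNIV. christoffel g x p k j * g x $ i $ p) = (\<Sum>p\<in>UNIV. g x $ i $ p * christoffel g x p k j)"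
    by (simp add: mult.commute)
  also have "\<dots> = 1/2 * (pd k (\<lambda>y. g y $ j $ i) x + pd j (\<lambda>y. g y $ k $ i) x - pd i (\<lambda>y. g y $ k $ j) x)"
    by (rule christoffel_lowered) (rule riem_metric_invertible[OF assms])
  finally have lower_j: "(\<Sum>p\<in>UNIV. christoffel g x p k j * g x $ i $ p) = \<dots>" .
  show "pd k (\<lambda>y. g y $ i $ j) x =
      (\<Sum>p\<in>UNIV. christoffel g x p k i * g x $ p $ j) + (\<Sum>p\<in>UNIV. christoffel g x p k j * g x $ i $ p)"
    unfolding lower_i lower_j using dsym[of k i j] by (simp add: field_simps)
qed

lemma cov_axis_nth:
  "cov g (\<lambda>_. axis k 1) V x $ l = pd k (\<lambda>y. V y $ l) x + (\<Sum>p\<in>UNIV. christoffel g x l k p * V x $ p)"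
proof -
  have "(\<Sum>i\<in>UNIV. \<Sum>p\<in>UNIV. christoffel g x l i p * axis k 1 $ i * V x $ p)
      = (\<Sum>i\<in>UNIV. if i = k then \<Sum>p\<in>UNIV. christoffel g x l i p * V x $ p else 0)"
    by (rule sum.cong) (auto simp: axis_def)
  moreover have "(\<Sum>i\<in>UNIV. axis k 1 $ i * pd i (\<lambda>y. V y $ l) x)
      = (\<Sum>i\<in>UNIV. if i = k then pd i (\<lambda>y. V y $ l) x else 0)"
    by (rule sum.cong) (auto simp: axis_def)
  ultimately show ?thesis unfolding cov_def by simp
qed

lemma parallel_vf_iff:
  "parallel_vf U g V \<longleftrightarrow>
     (\<forall>x\<in>U. \<forall>k l. pd k (\<lambda>y. V y $ l) x = - (\<Sum>p\<in>UNIV. christoffel g x l k p * V x $ p))"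
  unfolding parallel_vf_def vec_eq_iff by (simp add: cov_axis_nth eq_neg_iff_add_eq_0)

lemma parallel_vf_matrix_vector_mult:
  assumes "smooth_tf U F" "smooth_vf U V" "parallel_tf U g F" "parallel_vf U g V"
  shows "parallel_vf U g (\<lambda>y. F y *v V y)"
  unfolding parallel_vf_iff
proof (intro ballI allI)
  fix x k j assume "x \<in> U"
  let ?\<Gamma> = "christoffel g x"
  have V': "pd k (\<lambda>y. V y $ l) x = - (\<Sum>p\<in>UNIV. ?\<Gamma> l k p * V x $ p)" for l
    using assms(4) \<open>x \<in> U\<close> unfolding parallel_vf_iff by blast
  have F': "pd k (\<lambda>y. F y $ j $ l) x
      = (\<Sum>p\<in>UNIV. ?\<Gamma> p k l * F x $ j $ p) - (\<Sum>p\<in>UNIV. ?\<Gamma> j k p * F x $ p $ l)" for l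
    using assms(3) \<open>x \<in> U\<close> unfolding parallel_tf_def by (simp add: algebra_simps)
  have "pd k (\<lambda>y. (F y *v V y) $ j) x
      = (\<Sum>l\<in>UNIV. F x $ j $ l * pd k (\<lambda>y. V y $ l) x + pd k (\<lambda>y. F y $ j $ l) x * V x $ l)"
    unfolding matrix_vector_mult_def vec_lambda_beta using \<open>x \<in> U\<close>
    by (simp add: pd_sum pd_mult smooth_tf_differentiable[OF assms(1)] smooth_vf_differentiable[OF assms(2)])
  also have "\<dots> = (\<Sum>l\<in>UNIV. \<Sum>p\<in>UNIV. ?\<Gamma> p k l * F x $ j $ p * V x $ l - F x $ j $ l * ?\<Gamma> l k p * V x $ p)
      - (\<Sum>l\<in>UNIV. \<Sum>p\<in>UNIV. ?\<Gamma> j k p * F x $ p $ l * V x $ l)"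
    by (simp add: V' F' sum_distrib_left sum_distrib_right sum_subtractf sum.distrib algebra_simps)
  also have "(\<Sum>l\<in>UNIV. \<Sum>p\<in>UNIV. ?\<Gamma> p k l * F x $ j $ p * V x $ l - F x $ j $ l * ?\<Gamma> l k p * V x $ p) = 0"
  proof -
    have "(\<Sum>l\<in>UNIV. \<Sum>p\<in>UNIV. ?\<Gamma> p k l * F x $ j $ p * V x $ l)
        = (\<Sum>l\<in>UNIV. \<Sum>p\<in>UNIV. F x $ j $ l * ?\<Gamma> l k p * V x $ p)"
      by (subst sum.swap) (simp add: mult_ac)
    then show ?thesis by (simp add: sum_subtractf)
  qed
  also have "(\<Sum>l\<in>UNIV. \<Sum>p\<in>UNIV. ?\<Gamma> j k p * F x $ p $ l * V x $ l) = (\<Sum>p\<in>UNIV. ?\<Gamma> j k p * (F x *v V x) $ p)"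
    unfolding matrix_vector_mult_def vec_lambda_beta sum_distrib_left
    by (subst sum.swap) (simp add: mult_ac)
  finally show "pd k (\<lambda>y. (F y *v V y) $ j) x = - (\<Sum>p\<in>UNIV. ?\<Gamma> j k p * (F x *v V x) $ p)"
    by simp
qed

lemma parallel_covector_at_lower:
  assumes "riem_metric U g" "x \<in> U" "parallel_vf U g W"
    and dW: "\<And>j. (\<lambda>y. W y $ j) differentiable (at x)"
  shows "parallel_covector_at g (\<lambda>y. g y *v W y) x"
  unfolding parallel_covector_at_def
proof (intro allI)
  fix k i
  let ?\<Gamma> = "christoffel g x"
  have W': "pd k (\<lambda>y. W y $ j) x = - (\<Sum>p\<in>UNIV. ?\<Gamma> j k p * W x $ p)" for j
    using assms(3) \<open>x \<in> U\<close> unfolding parallel_vf_iff by blast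
  have g': "pd k (\<lambda>y. g y $ i $ j) x
      = (\<Sum>p\<in>UNIV. ?\<Gamma> p k i * g x $ p $ j) + (\<Sum>p\<in>UNIV. ?\<Gamma> p k j * g x $ i $ p)" for j
    using riem_metric_parallel[OF assms(1,2)] unfolding parallel_form_at_def by blast
  have "pd k (\<lambda>y. (g y *v W y) $ i) x
      = (\<Sum>j\<in>UNIV. g x $ i $ j * pd k (\<lambda>y. W y $ j) x + pd k (\<lambda>y. g y $ i $ j) x * W x $ j)"
    unfolding matrix_vector_mult_def vec_lambda_beta
    using riem_metric_differentiable[OF assms(1,2)] dW by (simp add: pd_sum pd_mult)
  also have "\<dots> = (\<Sum>j\<in>UNIV. \<Sum>p\<in>UNIV. ?\<Gamma> p k i * g x $ p $ j * W x $ j)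
      + ((\<Sum>j\<in>UNIV. \<Sum>p\<in>UNIV. ?\<Gamma> p k j * g x $ i $ p * W x $ j)
         - (\<Sum>j\<in>UNIV. \<Sum>p\<in>UNIV. g x $ i $ j * ?\<Gamma> j k p * W x $ p))"
    by (simp add: W' g' sum_distrib_left sum_distrib_right sum_subtractf sum.distrib algebra_simps)
  also have "(\<Sum>j\<in>UNIV. \<Sum>p\<in>UNIV. ?\<Gamma> p k j * g x $ i $ p * W x $ j)
      = (\<Sum>j\<in>UNIV. \<Sum>p\<in>UNIV. g x $ i $ j * ?\<Gamma> j k p * W x $ p)"
    by (subst sum.swap) (simp add: mult_ac)
  also have "(\<Sum>j\<in>UNIV. \<Sum>p\<in>UNIV. ?\<Gamma> p k i * g x $ p $ j * W x $ j)
      = (\<Sum>p\<in>UNIV. ?\<Gamma> p k i * (g x *v W x) $ p)"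
    unfolding matrix_vector_mult_def vec_lambda_beta sum_distrib_left
    by (subst sum.swap) (simp add: mult_ac)
  finally show "pd k (\<lambda>y. (g y *v W y) $ i) x = (\<Sum>p\<in>UNIV. ?\<Gamma> p k i * (g x *v W x) $ p)"
    by simp
qed

lemma parallel_form_at_add:
  assumes "parallel_form_at g H x" "parallel_form_at g K x"
    and "\<And>i j. (\<lambda>y. H y $ i $ j) differentiable (at x)" "\<And>i j. (\<lambda>y. K y $ i $ j) differentiable (at x)"
  shows "parallel_form_at g (\<lambda>y. H y + K y) x"
  using assms unfolding parallel_form_at_def
  by (simp add: pd_add sum.distrib algebra_simps)

lemma parallel_form_at_outer:
  assumes "parallel_covector_at g \<omega> x" "\<And>i. (\<lambda>y. \<omega> y $ i) differentiable (at x)"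
  shows "parallel_form_at g (\<lambda>y. \<chi> i j. \<omega> y $ i * \<omega> y $ j) x"
  using assms unfolding parallel_form_at_def parallel_covector_at_def
  by (simp add: pd_mult sum_distrib_left sum_distrib_right algebra_simps)

lemma metric_add_parallel_outer:
  assumes "riem_metric U g" "x \<in> U" "parallel_vf U g W" "\<And>j. (\<lambda>y. W y $ j) differentiable (at x)"
    and H_def: "H = (\<lambda>y. g y + (\<chi> i j. (g y *v W y) $ i * (g y *v W y) $ j))"
  shows "parallel_form_at g H x" and "\<And>i j. (\<lambda>y. H y $ i $ j) differentiable (at x)"
    and "transpose (H x) = H x" and "invertible (H x)"
proof -
  have d\<omega>: "(\<lambda>y. (g y *v W y) $ i) differentiable (at x)" for i
    by (rule differentiable_matrix_vector_mult_nth[OF riem_metric_differentiable[OF assms(1,2)] assms(4)])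
  then show "(\<lambda>y. H y $ i $ j) differentiable (at x)" for i j
    unfolding H_def by (simp add: riem_metric_differentiable[OF assms(1,2)])
  show "parallel_form_at g H x"
    unfolding H_def
    by (rule parallel_form_at_add[OF riem_metric_parallel[OF assms(1,2)]
          parallel_form_at_outer[OF parallel_covector_at_lower[OF assms(1-4)] d\<omega>]
          riem_metric_differentiable[OF assms(1,2)]])
      (simp add: d\<omega> differentiable_mult)
  show "transpose (H x) = H x" "invertible (H x)"
    unfolding H_def by (simp_all add: riem_metric_add_outer[OF assms(1,2)])
qed

section \<open>Conformal change of a parallel form\<close>

lemma christoffel_eq_if_parallel_form:
  assumes "parallel_form_at g H x" "transpose (H x) = H x" "invertible (H x)"
    and \<Gamma>_sym: "\<And>c a b. christoffel g x c a b = christoffel g x c b a"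
  shows "christoffel H x c a b = christoffel g x c a b"
proof -
  let ?\<Gamma> = "christoffel g x"
  note H_sym = symmetric_matrix_nth[OF assms(2)]
  have dH: "pd k (\<lambda>y. H y $ i $ j) x = (\<Sum>p\<in>UNIV. ?\<Gamma> p k i * H x $ p $ j) + (\<Sum>p\<in>UNIV. ?\<Gamma> p k j * H x $ i $ p)"
    for k i j using assms(1) unfolding parallel_form_at_def by blast
  have koszul: "pd a (\<lambda>y. H y $ b $ l) x + pd b (\<lambda>y. H y $ a $ l) x - pd l (\<lambda>y. H y $ a $ b) x
      = 2 * (\<Sum>p\<in>UNIV. H x $ l $ p * ?\<Gamma> p a b)" for l
  proof -
    have "(\<Sum>p\<in>UNIV. ?\<Gamma> p a l * H x $ b $ p) = (\<Sum>p\<in>UNIV. ?\<Gamma> p l a * H x $ p $ b)"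
      by (metis \<Gamma>_sym H_sym)
    moreover have "(\<Sum>p\<in>UNIV. ?\<Gamma> p b l * H x $ a $ p) = (\<Sum>p\<in>UNIV. ?\<Gamma> p l b * H x $ a $ p)"
      by (metis \<Gamma>_sym)
    moreover have "(\<Sum>p\<in>UNIV. ?\<Gamma> p b a * H x $ p $ l) = (\<Sum>p\<in>UNIV. H x $ l $ p * ?\<Gamma> p a b)"
      by (metis \<Gamma>_sym H_sym mult.commute)
    moreover have "(\<Sum>p\<in>UNIV. ?\<Gamma> p a b * H x $ p $ l) = (\<Sum>p\<in>UNIV. H x $ l $ p * ?\<Gamma> p a b)"
      by (metis H_sym mult.commute)
    ultimately show ?thesis by (simp add: dH)
  qed
  have "christoffel H x c a b = (\<Sum>l\<in>UNIV. matrix_inv (H x) $ c $ l * (\<Sum>p\<in>UNIV. H x $ l $ p * ?\<Gamma> p a b))"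
    unfolding christoffel_def koszul by (simp add: sum_distrib_left)
  also have "\<dots> = ?\<Gamma> c a b"
    by (rule matrix_mul_mat_1_cancel[OF matrix_inv_left[OF assms(3)]])
  finally show ?thesis .
qed

lemma christoffel_conformal:
  fixes H :: "real^'n::finite \<Rightarrow> real^'n^'n"
  assumes dH: "\<And>i j. (\<lambda>y. H y $ i $ j) differentiable (at x)" and d\<alpha>: "\<alpha> differentiable (at x)"
    and "\<alpha> x \<noteq> 0" "transpose (H x) = H x" "invertible (H x)"
  shows "christoffel (\<lambda>y. \<alpha> y *\<^sub>R H y) x c a b = christoffel H x c a b
    + (pd a \<alpha> x * (if c = b then 1 else 0) + pd b \<alpha> x * (if c = a then 1 else 0)
       - H x $ a $ b * grad H \<alpha> x $ c) / (2 * \<alpha> x)"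
proof -
  define Hi where "Hi = matrix_inv (H x)"
  define K where "K l = pd a (\<lambda>y. H y $ b $ l) x + pd b (\<lambda>y. H y $ a $ l) x - pd l (\<lambda>y. H y $ a $ b) x" for l
  define L where "L l = pd a \<alpha> x * H x $ b $ l + pd b \<alpha> x * H x $ a $ l - pd l \<alpha> x * H x $ a $ b" for l
  have d: "pd k (\<lambda>y. (\<alpha> y *\<^sub>R H y) $ i $ j) x = \<alpha> x * pd k (\<lambda>y. H y $ i $ j) x + pd k \<alpha> x * H x $ i $ j"
    for k i j using pd_mult[OF d\<alpha> dH] by simp
  have inv: "matrix_inv (\<alpha> x *\<^sub>R H x) $ c $ l = Hi $ c $ l / \<alpha> x" for l
    using assms(3,5) by (simp add: matrix_inv_scaleR Hi_def)
  have delta: "(\<Sum>l\<in>UNIV. Hi $ c $ l * H x $ j $ l) = (if c = j then 1 else 0)" for j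
    using matrix_mul_mat_1_nth[OF matrix_inv_left[OF assms(5)], of c j]
    by (simp add: Hi_def symmetric_matrix_nth[OF assms(4), of j])
  have "christoffel (\<lambda>y. \<alpha> y *\<^sub>R H y) x c a b = 1/2 * (\<Sum>l\<in>UNIV. Hi $ c $ l / \<alpha> x * (\<alpha> x * K l + L l))"
    unfolding christoffel_def d inv K_def L_def by (simp add: algebra_simps)
  also have "\<dots> = 1/2 * (\<Sum>l\<in>UNIV. Hi $ c $ l * K l + Hi $ c $ l * L l / \<alpha> x)"
    using assms(3) by (intro arg_cong[where f="\<lambda>s. 1/2 * s"] sum.cong refl) (simp add: field_simps)
  also have "\<dots> = 1/2 * (\<Sum>l\<in>UNIV. Hi $ c $ l * K l) + (\<Sum>l\<in>UNIV. Hi $ c $ l * L l) / (2 * \<alpha> x)"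
    by (simp add: sum.distrib sum_divide_distrib[symmetric] field_simps)
  also have "(\<Sum>l\<in>UNIV. Hi $ c $ l * L l) = pd a \<alpha> x * (\<Sum>l\<in>UNIV. Hi $ c $ l * H x $ b $ l)
      + pd b \<alpha> x * (\<Sum>l\<in>UNIV. Hi $ c $ l * H x $ a $ l) - H x $ a $ b * (\<Sum>l\<in>UNIV. Hi $ c $ l * pd l \<alpha> x)"
    unfolding L_def by (simp add: algebra_simps sum.distrib sum_subtractf sum_distrib_left)
  also have "\<dots> = pd a \<alpha> x * (if c = b then 1 else 0)
      + pd b \<alpha> x * (if c = a then 1 else 0) - H x $ a $ b * grad H \<alpha> x $ c"
    by (simp only: delta) (simp add: grad_def Hi_def)
  finally show ?thesis unfolding christoffel_def K_def Hi_def .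
qed

lemma trace_christoffel_conformal:
  fixes H :: "real^'n::finite \<Rightarrow> real^'n^'n"
  assumes dH: "\<And>i j. (\<lambda>y. H y $ i $ j) differentiable (at x)" and d\<alpha>: "\<alpha> differentiable (at x)"
    and "\<alpha> x \<noteq> 0" "transpose (H x) = H x" "invertible (H x)"
  shows "(\<Sum>a\<in>UNIV. \<Sum>b\<in>UNIV. (christoffel H x c a b - christoffel (\<lambda>y. \<alpha> y *\<^sub>R H y) x c a b)
      * matrix_inv (\<alpha> x *\<^sub>R H x) $ a $ b) = (real CARD('n) - 2) / (2 * (\<alpha> x)\<^sup>2) * grad H \<alpha> x $ c"
proof -
  define Hi where "Hi = matrix_inv (H x)"
  define G where "G = grad H \<alpha> x $ c"
  have Hi_sym: "Hi $ i $ j = Hi $ j $ i" for i j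
    unfolding Hi_def by (rule symmetric_matrix_nth[OF matrix_inv_symmetric[OF assms(4,5)]])
  have G: "(\<Sum>l\<in>UNIV. Hi $ c $ l * pd l \<alpha> x) = G"
    unfolding G_def grad_def Hi_def by simp
  have trace: "(\<Sum>a\<in>UNIV. \<Sum>b\<in>UNIV. Hi $ a $ b * H x $ a $ b) = real CARD('n)"
    using matrix_mul_mat_1_nth[OF matrix_inv_left[OF assms(5)]]
    by (simp add: Hi_def symmetric_matrix_nth[OF assms(4), of _ "_ :: 'n"])
  have "(\<Sum>a\<in>UNIV. \<Sum>b\<in>UNIV. (christoffel H x c a b - christoffel (\<lambda>y. \<alpha> y *\<^sub>R H y) x c a b)
      * matrix_inv (\<alpha> x *\<^sub>R H x) $ a $ b)
    = (\<Sum>a\<in>UNIV. \<Sum>b\<in>UNIV. Hi $ a $ b * (H x $ a $ b * G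
        - pd a \<alpha> x * (if c = b then 1 else 0) - pd b \<alpha> x * (if c = a then 1 else 0))) / (2 * (\<alpha> x)\<^sup>2)"
    using assms(3)
    by (simp add: christoffel_conformal[OF dH d\<alpha> assms(3-5)] matrix_inv_scaleR[OF assms(3,5)]
        G_def Hi_def sum_divide_distrib power2_eq_square field_simps)
  also have "(\<Sum>a\<in>UNIV. \<Sum>b\<in>UNIV. Hi $ a $ b * (H x $ a $ b * G
        - pd a \<alpha> x * (if c = b then 1 else 0) - pd b \<alpha> x * (if c = a then 1 else 0)))
      = (\<Sum>a\<in>UNIV. \<Sum>b\<in>UNIV. Hi $ a $ b * H x $ a $ b) * G
        - (\<Sum>a\<in>UNIV. \<Sum>b\<in>UNIV. Hi $ a $ b * (pd a \<alpha> x * (if c = b then 1 else 0)))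
        - (\<Sum>a\<in>UNIV. \<Sum>b\<in>UNIV. Hi $ a $ b * (pd b \<alpha> x * (if c = a then 1 else 0)))"
    by (simp add: right_diff_distrib sum_subtractf sum_distrib_left sum_distrib_right mult_ac)
  also have "(\<Sum>a\<in>UNIV. \<Sum>b\<in>UNIV. Hi $ a $ b * (pd a \<alpha> x * (if c = b then 1 else 0))) = G"
    by (simp add: G[symmetric] Hi_sym[of _ c] if_distrib cong: if_cong)
  also have "(\<Sum>a\<in>UNIV. \<Sum>b\<in>UNIV. Hi $ a $ b * (pd b \<alpha> x * (if c = a then 1 else 0))) = G"
    by (subst sum.swap) (simp add: G[symmetric] if_distrib cong: if_cong)
  finally show ?thesis
    unfolding trace G_def using assms(3) by (simp add: field_simps)
qed

lemma grad_eq_matrix_inv_mult: "grad g f x = matrix_inv (g x) *v (\<chi> l. pd l f x)"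
  by (simp add: grad_def matrix_vector_mult_def)

lemma grad_rank_one_update:
  fixes g H :: "real^'n::finite \<Rightarrow> real^'n^'n"
  assumes H: "H x = g x + (\<chi> i j. (g x *v w) $ i * (g x *v w) $ j)"
    and "transpose (g x) = g x" "invertible (g x)" "invertible (H x)"
    and orth: "(\<Sum>i\<in>UNIV. w $ i * pd i \<alpha> x) = 0"
  shows "grad H \<alpha> x = grad g \<alpha> x"
proof -
  define d where "d = (\<chi> l. pd l \<alpha> x)"
  define u where "u = matrix_inv (g x) *v d"
  have gu: "g x *v u = d"
    unfolding u_def by (simp add: matrix_vector_mul_assoc matrix_inv_right[OF assms(3)])
  have "(g x *v w) \<bullet> u = w \<bullet> (g x *v u)"
    by (metis assms(2) dot_lmul_matrix vector_transpose_matrix)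
  also have "\<dots> = 0"
    using orth by (simp add: gu d_def inner_vec_def)
  finally have "(g x *v w) \<bullet> u = 0" .
  then have "H x *v u = d"
    by (simp add: H matrix_vector_mult_add_rdistrib gu outer_product_mult_vector)
  then have "matrix_inv (H x) *v d = u"
    by (metis matrix_inv_left[OF assms(4)] matrix_vector_mul_assoc matrix_vector_mul_lid)
  then show ?thesis by (simp add: grad_eq_matrix_inv_mult d_def u_def)
qed

section \<open>Tension field of the identity\<close>

lemma orthonormal_frame_outer_sum:
  fixes e :: "'n::finite \<Rightarrow> real^'n \<Rightarrow> real^'n"
  assumes "orthonormal_frame U g e" "x \<in> U"
  shows "(\<Sum>i\<in>UNIV. e i x $ a * e i x $ b) = matrix_inv (g x) $ a $ b"
proof -
  define E :: "real^'n^'n" where "E = (\<chi> a i. e i x $ a)"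
  have "(transpose E ** g x ** E) $ i $ j = e i x \<bullet> (g x *v e j x)" for i j
    unfolding matrix_matrix_mult_def transpose_def inner_vec_def matrix_vector_mult_def E_def
    by (simp add: sum_distrib_left sum_distrib_right mult_ac) (rule sum.swap)
  then have "transpose E ** g x ** E = mat 1"
    using assms unfolding orthonormal_frame_def by (simp add: vec_eq_iff mat_def)
  then have "E ** (transpose E ** g x) = mat 1"
    by (metis matrix_left_right_inverse matrix_mul_assoc)
  then have "g x ** (E ** transpose E) = mat 1"
    by (metis matrix_left_right_inverse matrix_mul_assoc)
  then have "matrix_inv (g x) = E ** transpose E"
    by (rule matrix_inv_unique)
  then show ?thesis
    by (simp add: matrix_matrix_mult_def transpose_def E_def)
qed

lemma dphi_id: "dphi id y v = v"
  unfolding dphi_def by (simp add: pd_vec_nth vec_eq_iff if_distrib cong: if_cong)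

lemma tension_id_nth:
  "tension g' h id e x $ c = (\<Sum>a\<in>UNIV. \<Sum>b\<in>UNIV.
     (christoffel h x c a b - christoffel g' x c a b) * (\<Sum>i\<in>UNIV. e i x $ a * e i x $ b))"
proof -
  have "tension g' h id e x $ c = (\<Sum>i\<in>UNIV. \<Sum>a\<in>UNIV. \<Sum>b\<in>UNIV.
      (christoffel h x c a b - christoffel g' x c a b) * (e i x $ a * e i x $ b))"
    unfolding tension_def cov_pull_def cov_def
    by (simp add: dphi_id sum_subtractf sum.distrib algebra_simps)
  also have "\<dots> = (\<Sum>a\<in>UNIV. \<Sum>b\<in>UNIV. \<Sum>i\<in>UNIV.
      (christoffel h x c a b - christoffel g' x c a b) * (e i x $ a * e i x $ b))"
    by (subst sum.swap) (subst sum.swap, rule refl)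
  finally show ?thesis by (simp only: sum_distrib_left)
qed

lemma tension_id_orthonormal_frame:
  assumes "orthonormal_frame U g' e" "x \<in> U"
  shows "tension g' h id e x $ c = (\<Sum>a\<in>UNIV. \<Sum>b\<in>UNIV.
     (christoffel h x c a b - christoffel g' x c a b) * matrix_inv (g' x) $ a $ b)"
  by (simp only: tension_id_nth orthonormal_frame_outer_sum[OF assms])

lemma tension_id_conformal_parallel:
  fixes H :: "real^'n::finite \<Rightarrow> real^'n^'n"
  assumes "orthonormal_frame U (\<lambda>y. \<alpha> y *\<^sub>R H y) e" "x \<in> U" "riem_metric U g"
    and "parallel_form_at g H x" "\<And>i j. (\<lambda>y. H y $ i $ j) differentiable (at x)"
    and "\<alpha> differentiable (at x)" "\<alpha> x \<noteq> 0" "transpose (H x) = H x" "invertible (H x)"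
  shows "tension (\<lambda>y. \<alpha> y *\<^sub>R H y) g id e x
    = ((real CARD('n) - 2) / (2 * (\<alpha> x)\<^sup>2)) *\<^sub>R grad H \<alpha> x"
proof -
  have "christoffel g x c a b = christoffel g x c b a" for c a b
    by (rule christoffel_symmetric) (rule riem_metric_pd_symmetric[OF assms(3,2)])
  then have "christoffel g x c a b = christoffel H x c a b" for c a b
    by (rule christoffel_eq_if_parallel_form[OF assms(4,8,9), symmetric])
  then show ?thesis
    by (simp add: vec_eq_iff tension_id_orthonormal_frame[OF assms(1,2)]
        trace_christoffel_conformal[OF assms(5-9)])
qed

theorem theorem4p2:
  fixes U :: "(real^'n::finite) set" and m :: nat
    and F g :: "real^'n \<Rightarrow> real^'n^'n" and V :: "real^'n \<Rightarrow> real^'n"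
    and \<alpha> :: "real^'n \<Rightarrow> real" and e :: "'n \<Rightarrow> real^'n \<Rightarrow> real^'n" and x :: "real^'n"
  assumes "para_kaehler_norden m U F g"
    and "smooth_vf U V" and "\<forall>y\<in>U. V y \<bullet> (g y *v V y) = 1" and "parallel_vf U g V"
    and "smooth_fn U \<alpha>" and "\<forall>y\<in>U. \<alpha> y > 0"
    and "\<forall>y\<in>U. dir_deriv (\<lambda>z. F z *v V z) \<alpha> y = 0"
    and "orthonormal_frame U (g_alpha g F V \<alpha>) e"
    and "x \<in> U"
  shows "tension (g_alpha g F V \<alpha>) g id e x = ((real m - 1) / (\<alpha> x)\<^sup>2) *\<^sub>R grad g \<alpha> x"
proof -
  from assms(1) have n: "CARD('n) = 2 * m" and g: "riem_metric U g"
    and F: "smooth_tf U F" "parallel_tf U g F"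
    unfolding para_kaehler_norden_def by auto
  define W where "W = (\<lambda>y. F y *v V y)"
  define H where "H = (\<lambda>y. g y + (\<chi> i j. (g y *v W y) $ i * (g y *v W y) $ j))"
  have W: "parallel_vf U g W"
    unfolding W_def using F assms(2,4) by (intro parallel_vf_matrix_vector_mult)
  have dW: "(\<lambda>y. W y $ j) differentiable (at x)" for j
    unfolding W_def using assms(9)
    by (intro differentiable_matrix_vector_mult_nth smooth_tf_differentiable[OF F(1)]
        smooth_vf_differentiable[OF assms(2)])
  note H = metric_add_parallel_outer[OF g assms(9) W dW H_def]
  have g_alpha: "g_alpha g F V \<alpha> = (\<lambda>y. \<alpha> y *\<^sub>R H y)"
    by (simp add: fun_eq_iff g_alpha_def H_def W_def)
  have "tension (\<lambda>y. \<alpha> y *\<^sub>R H y) g id e x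
      = ((real CARD('n) - 2) / (2 * (\<alpha> x)\<^sup>2)) *\<^sub>R grad H \<alpha> x"
    by (rule tension_id_conformal_parallel[OF _ assms(9) g H(1,2) _ _ H(3,4)])
      (use assms(6,8,9) g_alpha smooth_fn_differentiable[OF assms(5,9)] in auto)
  moreover have "grad H \<alpha> x = grad g \<alpha> x"
    using assms(7,9) H(4)
    by (intro grad_rank_one_update[where w = "W x"])
      (auto simp: H_def W_def dir_deriv_def riem_metric_invertible[OF g] riem_metric_transpose[OF g])
  moreover have "(real CARD('n) - 2) / (2 * (\<alpha> x)\<^sup>2) = (real m - 1) / (\<alpha> x)\<^sup>2"
    using n by (simp add: divide_simps)
  ultimately show ?thesis
    by (simp add: g_alpha)
qed

end
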